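(* Let $Q>0$ and $\Gamma>0$. Let $f$ be a nonnegative random variable with a continuous probability density function, and let $I$ be a nonnegative random variable independent of $f$ with $\mathbb{E}[I]=\Gamma$. Define $$C^{{\rm ER},a}_{\rm PR,CP}=\mathbb{E}\left[\log\left(1+\frac{fQ}{1+I}\right)\right],\qquad C^{{\rm ER},p}_{\rm PR,CP}=\mathbb{E}\left[\log\left(1+\frac{fQ}{1+\Gamma}\right)\right].$$ Then $C^{{\rm ER},a}_{\rm PR,CP}\geq C^{{\rm ER},p}_{\rm PR,CP}$.
   Context: Setting: a primary radio (PR) fading link with channel power gain $f$ and unit-power Gaussian noise, sharing spectrum with a cognitive radio (CR) whose interference power at the PR receiver is $I$. The CR is independent of $f$; $I$ is, e.g., $I=gp$ where $g$ is the CR-to-PR channel power gain and $p$ is the CR transmit power, which depends only on CR-side channel gains independent of $f$. Under the average-interference-power (AIP) constraint with threshold $\Gamma$, the interference is random with $\mathbb{E}[I]=\Gamma$. Under the peak-interference-power (PIP) constraint with threshold $\Gamma$, the interference equals $\Gamma$ in every fading state. The PR uses the constant-power (CP) policy: it transmits with power $Q$ in every fading state, treating interference as Gaussian noise. $C^{{\rm ER},a}_{\rm PR,CP}$ and $C^{{\rm ER},p}_{\rm PR,CP}$ are the resulting PR ergodic capacities in the AIP and PIP cases. *)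

theory Defs
  imports "HOL-Probability.Probability"
begin

end

theory Submission
  imports Defs
begin

text \<open>For fixed \<open>a \<ge> 0\<close> the map \<open>x \<mapsto> ln (1 + a / x)\<close> is convex on \<open>x > 0\<close>, so the
  capacity under random interference lies above its tangent at the mean interference.
  Taking expectations, the linear term \<open>c(f) (I - \<Gamma>)\<close> has mean zero because \<open>f\<close> and
  \<open>I\<close> are independent and \<open>E[I] = \<Gamma>\<close>; this is Jensen's inequality conditioned on \<open>f\<close>.\<close>

lemma ln_ge_one_minus_inverse:
  fixes z :: real
  assumes "0 < z"
  shows "1 - 1 / z \<le> ln z"
proof -
  have "ln (1 / z) \<le> 1 / z - 1"
    using assms by (intro ln_le_minus_one) simp
  then show ?thesis
    using assms by (simp add: ln_div)
qed

lemma ln_one_plus_divide_above_tangent: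
  fixes a x y :: real
  assumes a: "0 \<le> a" and x: "0 < x" and y: "0 < y"
  shows "ln (1 + a / y) - a / (y * (y + a)) * (x - y) \<le> ln (1 + a / x)"
proof -
  define z where "z = (x + a) * y / (x * (y + a))"
  have "0 < x + a" "0 < y + a"
    using a x y by auto
  then have "0 < z"
    using x y by (simp add: z_def)
  have "ln (1 + a / x) - ln (1 + a / y) = ln ((x + a) / x) - ln ((y + a) / y)"
    using x y by (simp add: field_simps)
  also have "\<dots> = ln z"
    using a x y by (simp add: z_def ln_div ln_mult)
  also have "\<dots> \<ge> 1 - 1 / z"
    using \<open>0 < z\<close> by (rule ln_ge_one_minus_inverse)
  also have "1 - 1 / z = a * (y - x) / ((x + a) * y)"
    using \<open>0 < x + a\<close> \<open>0 < y + a\<close> x y by (simp add: z_def divide_simps) (simp add: algebra_simps)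
  also have "\<dots> = - a / (y * (y + a)) * (x - y) + a * (y - x)\<^sup>2 / (y * (x + a) * (y + a))"
    using \<open>0 < x + a\<close> \<open>0 < y + a\<close> x y
    by (simp add: divide_simps) (simp add: algebra_simps power2_eq_square)
  also have "\<dots> \<ge> - a / (y * (y + a)) * (x - y)"
    using a x y by simp
  finally show ?thesis
    by simp
qed

lemma ln_one_plus_divide_le:
  fixes a x y :: real
  assumes a: "0 \<le> a" and x: "1 \<le> x" and y: "1 \<le> y"
  shows "ln (1 + a / x) \<le> ln (1 + a / y) + ln y"
proof -
  have "a / x \<le> a"
    using a x by (simp add: divide_le_eq mult_le_cancel_left1)
  moreover have "0 \<le> a / x"
    using a x by simp
  ultimately have "ln (1 + a / x) \<le> ln (y + a)"
    using y by (intro ln_mono) auto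
  also have "y + a = (1 + a / y) * y"
    using y by (simp add: field_simps)
  also have "ln \<dots> = ln (1 + a / y) + ln y"
  proof (rule ln_mult_pos)
    show "0 < 1 + a / y"
      using a y by (simp add: add_pos_nonneg)
  qed (use y in simp)
  finally show ?thesis .
qed

lemma norm_divide_mult_add_le_one:
  fixes a y :: real
  assumes a: "0 \<le> a" and y: "1 \<le> y"
  shows "norm (a / (y * (y + a))) \<le> 1"
proof -
  have "1 * a \<le> y * (y + a)"
    using a y by (intro mult_mono) auto
  then show ?thesis
    using a y by (simp add: divide_le_eq)
qed

lemma (in prob_space) indep_var_integral_mult_centered:
  fixes X Y :: "'a \<Rightarrow> real" and h :: "real \<Rightarrow> real"
  assumes indep: "indep_var borel X borel Y"
    and h: "h \<in> borel_measurable borel"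
    and h_bounded: "\<And>x. x \<in> space M \<Longrightarrow> norm (h (X x)) \<le> K"
    and int_Y: "integrable M Y"
  shows "integrable M (\<lambda>x. h (X x) * (Y x - expectation Y))"
    and "(\<integral>x. h (X x) * (Y x - expectation Y) \<partial>M) = 0"
proof -
  have int_h: "integrable M (\<lambda>x. h (X x))"
  proof (rule Bochner_Integration.integrable_bound[of _ "\<lambda>_. K"])
    show "(\<lambda>x. h (X x)) \<in> borel_measurable M"
      using indep_var_rv1[OF indep] h by measurable
  qed (use h_bounded in \<open>auto intro: AE_I2 order_trans[OF _ abs_ge_self]\<close>)
  have indep': "indep_var borel (\<lambda>x. h (X x)) borel (\<lambda>x. Y x - expectation Y)"
    using indep_var_compose[OF indep h, of "\<lambda>t. t - expectation Y"] by (simp add: comp_def)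
  have int_Y': "integrable M (\<lambda>x. Y x - expectation Y)"
    using int_Y by simp
  show "integrable M (\<lambda>x. h (X x) * (Y x - expectation Y))"
    using indep' int_h int_Y' by (rule indep_var_integrable)
  have "expectation (\<lambda>x. Y x - expectation Y) = 0"
    using int_Y by (simp add: prob_space)
  then show "(\<integral>x. h (X x) * (Y x - expectation Y) \<partial>M) = 0"
    using indep_var_lebesgue_integral[OF indep' int_h int_Y'] by simp
qed

text \<open>When \<open>B\<close> is not integrable its expectation is the junk value \<open>0\<close>, and the claim
  reduces to \<open>0 \<le> A\<close>.\<close>

lemma (in prob_space) expectation_le_of_zero_mean_correction:
  fixes A B C :: "'a \<Rightarrow> real"
  assumes A: "A \<in> borel_measurable M"
    and A_nonneg: "\<And>x. x \<in> space M \<Longrightarrow> 0 \<le> A x"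
    and A_le: "\<And>x. x \<in> space M \<Longrightarrow> A x \<le> B x + K"
    and A_ge: "\<And>x. x \<in> space M \<Longrightarrow> B x - C x \<le> A x"
    and int_C: "integrable M C" and mean_C: "expectation C = 0"
  shows "expectation B \<le> expectation A"
proof (cases "integrable M B")
  case False
  then show ?thesis
    using A_nonneg by (simp add: not_integrable_integral_eq integral_nonneg_AE)
next
  case True
  have int_A: "integrable M A"
  proof (rule Bochner_Integration.integrable_bound)
    show "integrable M (\<lambda>x. B x + K)"
      using True by simp
    show "AE x in M. norm (A x) \<le> norm (B x + K)"
      using A_nonneg A_le by (intro AE_I2) fastforce
  qed fact
  have "expectation B = expectation (\<lambda>x. B x - C x)"
    using True int_C mean_C by simp
  also have "\<dots> \<le> expectation A"
    using True int_C int_A A_ge by (intro integral_mono) auto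
  finally show ?thesis .
qed

theorem theorem4p1:
  fixes M :: "'a measure" and f I :: "'a \<Rightarrow> real" and g :: "real \<Rightarrow> real"
    and Q \<Gamma> :: real
  assumes "prob_space M"
    and "Q > 0" and "\<Gamma> > 0"
    and f_nonneg: "\<forall>x\<in>space M. f x \<ge> 0"
    and f_density: "distributed M lborel f (\<lambda>t. ennreal (g t))"
    and g_nonneg: "\<forall>t. g t \<ge> 0"
    and g_cont: "continuous_on UNIV g"
    and I_rv: "I \<in> borel_measurable M"
    and I_nonneg: "\<forall>x\<in>space M. I x \<ge> 0"
    and indep: "prob_space.indep_var M borel f borel I"
    and I_int: "integrable M I"
    and I_mean: "prob_space.expectation M I = \<Gamma>"
  shows "prob_space.expectation M (\<lambda>x. ln (1 + f x * Q / (1 + I x)))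
         \<ge> prob_space.expectation M (\<lambda>x. ln (1 + f x * Q / (1 + \<Gamma>)))"
proof -
  interpret prob_space M by fact
  note Q = \<open>Q > 0\<close> and \<Gamma> = \<open>\<Gamma> > 0\<close>
  have f: "f \<in> borel_measurable M"
    using distributed_measurable[OF f_density] by simp
  define c where "c t = t * Q / ((1 + \<Gamma>) * (1 + \<Gamma> + t * Q))" for t
  have c: "c \<in> borel_measurable borel"
    unfolding c_def by measurable
  have c_bounded: "norm (c (f x)) \<le> 1" if "x \<in> space M" for x
    unfolding c_def using f_nonneg that Q \<Gamma> by (intro norm_divide_mult_add_le_one) auto
  note centered = indep_var_integral_mult_centered[OF indep c c_bounded I_int, unfolded I_mean]
  show ?thesis
  proof (rule expectation_le_of_zero_mean_correction)
    show "(\<lambda>x. ln (1 + f x * Q / (1 + I x))) \<in> borel_measurable M"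
      using f I_rv by measurable
    show "integrable M (\<lambda>x. c (f x) * (I x - \<Gamma>))"
      and "expectation (\<lambda>x. c (f x) * (I x - \<Gamma>)) = 0"
      using centered by simp_all
  next
    fix x assume "x \<in> space M"
    then have fQ: "0 \<le> f x * Q" and "0 \<le> I x"
      using f_nonneg I_nonneg Q by auto
    then show "0 \<le> ln (1 + f x * Q / (1 + I x))"
      by simp
    show "ln (1 + f x * Q / (1 + I x)) \<le> ln (1 + f x * Q / (1 + \<Gamma>)) + ln (1 + \<Gamma>)"
      using fQ \<open>0 \<le> I x\<close> \<Gamma> by (intro ln_one_plus_divide_le) auto
    show "ln (1 + f x * Q / (1 + \<Gamma>)) - c (f x) * (I x - \<Gamma>) \<le> ln (1 + f x * Q / (1 + I x))"
      using ln_one_plus_divide_above_tangent[OF fQ, of "1 + I x" "1 + \<Gamma>"] \<open>0 \<le> I x\<close> \<Gamma>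
      by (simp add: c_def add.assoc)
  qed
qed

end
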